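(* Consider the Gaussian linear model $y=X\beta_0+\varepsilon$, $\varepsilon\sim N_n(0,\sigma_0^2I_n)$ with known $\sigma_0^2$, and suppose (A1) $s_0\log p=o(n)$, $s_0\log p\to\infty$, and (A11) $\|X\|_{\mathrm{op}}=O(\sqrt n)$ hold. Let $m_n=Cs_0L_n$, $\bar\epsilon_n^2=s_0\log m_n/n$ with $s_0\log m_n\to\infty$, and $\mathcal A_n=\{A:S_0\subseteq A,\ |A|\le m_n\}$. Assume uniform prior concentration: there is a constant $C_1>0$ such that for all sufficiently large $n$ and all $A\in\mathcal A_n$, $\Pi_A(\|\beta-\beta_0\|_2\le\bar\epsilon_n\mid\tilde z^* )\ge\exp(-C_1n\bar\epsilon_n^2)$. Then there is a constant $C_D>0$ such that for every $\delta>0$ there are events $\Omega_{n,A}$ with $\sup_{A\in\mathcal A_n}P_{\beta_0}(\Omega_{n,A}^c)\to0$ and, on $\Omega_{n,A}$, $$D_{n,A}:=\int_{\Theta(A)}\frac{f_\beta(y)}{f_{\beta_0}(y)}\,d\Pi_A(\beta\mid\tilde z^* )\ \ge\ \exp\big(-(C_D+\delta)n\bar\epsilon_n^2\big).$$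
   Context: $S_0=\{j:\beta_{0j}\ne0\}$, $s_0=|S_0|$, $p=p_n$; $L_n$ is a sequence growing at most polylogarithmically in $p$ and $C>0$ a constant. $\Theta(A)=\{\beta\in\mathbb R^p:\beta_j=0\ \forall j\notin A\}$. $f_\beta$ is the $N_n(X\beta,\sigma_0^2I_n)$ density and $P_{\beta_0}$ the law of $y$ under $\beta_0$. $\Pi_A(\cdot\mid\tilde z^* )$ is the guided regularized horseshoe prior restricted to coordinates in $A$ (with $\beta_{A^c}=0$): with $\kappa^2(z;\lambda,\tau,c,\eta)=\dfrac{c^2\tau^2\lambda^2e^{\eta z}}{c^2+\tau^2\lambda^2e^{\eta z}}$, independently $\lambda_j\sim C^+(0,1)$, $\tau\sim C^+(0,\tau_0)$, $c^2\sim\mathrm{IG}(a_c,b_c)$, $\eta\sim N^+(0,\sigma_\eta^2)$, and $\beta_j\sim N(0,\sigma_0^2\kappa^2(\tilde z_j^*;\lambda_j,\tau,c,\eta))$ for $j\in A$, for a fixed guidance vector $\tilde z^*$. *)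

theory Defs
  imports "HOL-Probability.Probability"
begin

definition half_cauchy_density :: "real \<Rightarrow> real \<Rightarrow> real" where
  "half_cauchy_density s x = (if x > 0 then 2 / (pi * s * (1 + (x / s)^2)) else 0)"

definition half_normal_density :: "real \<Rightarrow> real \<Rightarrow> real" where
  "half_normal_density v x = (if x > 0 then 2 * normal_density 0 (sqrt v) x else 0)"

definition inv_gamma_density :: "real \<Rightarrow> real \<Rightarrow> real \<Rightarrow> real" where
  "inv_gamma_density a b x =
     (if x > 0 then b powr a / Gamma a * x powr (-a - 1) * exp (- b / x) else 0)"

definition kappa2 :: "real \<Rightarrow> real \<Rightarrow> real \<Rightarrow> real \<Rightarrow> real \<Rightarrow> real" where
  "kappa2 z lam tau c2 eta =
     c2 * tau^2 * lam^2 * exp (eta * z) / (c2 + tau^2 * lam^2 * exp (eta * z))"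

definition ghs_hyper :: "nat set \<Rightarrow> real \<Rightarrow> real \<Rightarrow> real \<Rightarrow> real
    \<Rightarrow> ((nat \<Rightarrow> real) \<times> real \<times> real \<times> real) measure" where
  "ghs_hyper A tau0 ac bc sig_eta =
     (PiM A (\<lambda>_. density lborel (half_cauchy_density 1)))
     \<Otimes>\<^sub>M (density lborel (half_cauchy_density tau0)
     \<Otimes>\<^sub>M (density lborel (inv_gamma_density ac bc)
     \<Otimes>\<^sub>M density lborel (half_normal_density (sig_eta^2))))"

text \<open>The prior Pi_A( . | z): a measure on the coordinates (beta_j)_{j\<in>A}
  (the remaining coordinates are 0, see \<open>ext_coef\<close>).  sigma0 is the known noise sd.\<close>
definition ghs_prior :: "real \<Rightarrow> real \<Rightarrow> real \<Rightarrow> real \<Rightarrow> real \<Rightarrow> (nat \<Rightarrow> real)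
    \<Rightarrow> nat set \<Rightarrow> (nat \<Rightarrow> real) measure" where
  "ghs_prior sigma0 tau0 ac bc sig_eta z A =
     ghs_hyper A tau0 ac bc sig_eta \<bind>
       (\<lambda>(lam, tau, c2, eta).
          PiM A (\<lambda>j. density lborel
                   (normal_density 0 (sigma0 * sqrt (kappa2 (z j) (lam j) tau c2 eta)))))"

definition ext_coef :: "nat set \<Rightarrow> (nat \<Rightarrow> real) \<Rightarrow> nat \<Rightarrow> real" where
  "ext_coef A b j = (if j \<in> A then b j else 0)"

definition matvec :: "nat \<Rightarrow> (nat \<Rightarrow> nat \<Rightarrow> real) \<Rightarrow> (nat \<Rightarrow> real) \<Rightarrow> nat \<Rightarrow> real" where
  "matvec p X b i = (\<Sum>j<p. X i j * b j)"

definition l2norm :: "nat \<Rightarrow> (nat \<Rightarrow> real) \<Rightarrow> real" where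
  "l2norm d v = sqrt (\<Sum>j<d. (v j)^2)"

definition op_norm :: "nat \<Rightarrow> nat \<Rightarrow> (nat \<Rightarrow> nat \<Rightarrow> real) \<Rightarrow> real" where
  "op_norm n p X = Sup {l2norm n (matvec p X v) | v. l2norm p v \<le> 1}"

definition lik :: "nat \<Rightarrow> nat \<Rightarrow> (nat \<Rightarrow> nat \<Rightarrow> real) \<Rightarrow> real \<Rightarrow> (nat \<Rightarrow> real)
    \<Rightarrow> (nat \<Rightarrow> real) \<Rightarrow> real" where
  "lik n p X sigma0 b y = (\<Prod>i<n. normal_density (matvec p X b i) sigma0 (y i))"

definition data_law :: "nat \<Rightarrow> nat \<Rightarrow> (nat \<Rightarrow> nat \<Rightarrow> real) \<Rightarrow> real \<Rightarrow> (nat \<Rightarrow> real)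
    \<Rightarrow> (nat \<Rightarrow> real) measure" where
  "data_law n p X sigma0 b0 =
     PiM {..<n} (\<lambda>i. density lborel (normal_density (matvec p X b0 i) sigma0))"

definition support :: "nat \<Rightarrow> (nat \<Rightarrow> real) \<Rightarrow> nat set" where
  "support p b = {j. j < p \<and> b j \<noteq> 0}"

definition model_class :: "nat \<Rightarrow> nat set \<Rightarrow> real \<Rightarrow> nat set set" where
  "model_class p S0 m = {A. A \<subseteq> {..<p} \<and> S0 \<subseteq> A \<and> real (card A) \<le> m}"

definition Dn :: "nat \<Rightarrow> nat \<Rightarrow> (nat \<Rightarrow> nat \<Rightarrow> real) \<Rightarrow> real \<Rightarrow> (nat \<Rightarrow> real)
    \<Rightarrow> (nat \<Rightarrow> real) measure \<Rightarrow> nat set \<Rightarrow> (nat \<Rightarrow> real) \<Rightarrow> real" where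
  "Dn n p X sigma0 b0 PiA A y =
     (\<integral>b. lik n p X sigma0 (ext_coef A b) y / lik n p X sigma0 b0 y \<partial>PiA)"

end

theory Submission
  imports Defs
begin

text \<open>
  Write \<open>r(\<beta>) = X (\<beta> - \<beta>\<^sub>0)\<close>.  The likelihood ratio is
  \<open>exp ((2 \<langle>y - X \<beta>\<^sub>0, r(\<beta>)\<rangle> - |r(\<beta>)|\<^sup>2) / (2 \<sigma>\<^sub>0\<^sup>2))\<close>.  Restricting the prior integral to the ball
  \<open>B = {|\<beta> - \<beta>\<^sub>0| \<le> \<epsilon>}\<close> and applying Jensen's inequality to the prior conditioned on \<open>B\<close> gives
  \<open>D \<ge> \<Pi>(B) exp (\<langle>y - X \<beta>\<^sub>0, v\<rangle> / \<sigma>\<^sub>0\<^sup>2 - K\<^sup>2 n \<epsilon>\<^sup>2 / (2 \<sigma>\<^sub>0\<^sup>2))\<close>, where \<open>v\<close> is the conditional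
  mean of \<open>r\<close> on \<open>B\<close>, and \<open>|v|\<^sup>2 \<le> K\<^sup>2 n \<epsilon>\<^sup>2\<close> because \<open>\<parallel>X\<parallel> \<le> K \<surd>n\<close>.  The statistic
  \<open>\<langle>y - X \<beta>\<^sub>0, v\<rangle>\<close> is centred Gaussian with variance \<open>\<sigma>\<^sub>0\<^sup>2 |v|\<^sup>2\<close>, so by Chebyshev it stays above
  \<open>-\<delta> \<sigma>\<^sub>0\<^sup>2 n \<epsilon>\<^sup>2\<close> outside an event of probability at most \<open>K\<^sup>2 / (\<delta>\<^sup>2 \<sigma>\<^sub>0\<^sup>2 n \<epsilon>\<^sup>2) \<rightarrow> 0\<close>,
  uniformly in \<open>A\<close>.  Together with prior concentration \<open>\<Pi>(B) \<ge> exp (-C\<^sub>1 n \<epsilon>\<^sup>2)\<close> this gives the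
  claim with \<open>C\<^sub>D = C\<^sub>1 + K\<^sup>2 / (2 \<sigma>\<^sub>0\<^sup>2)\<close>.
\<close>

section \<open>Gaussian linear statistics\<close>

lemma indep_vars_PiM_components:
  assumes M: "\<And>i. i \<in> I \<Longrightarrow> prob_space (M i)" and I: "I \<noteq> {}"
  shows "prob_space.indep_vars (PiM I M) M (\<lambda>i y. y i) I"
proof -
  interpret prob_space "PiM I M" by (rule prob_space_PiM) (use M in auto)
  show ?thesis
  proof (subst indep_vars_iff_distr_eq_PiM'[OF I])
    show "random_variable (M i) (\<lambda>y. y i)" if "i \<in> I" for i
      using that by (auto intro!: measurable_component_singleton)
    have "distr (PiM I M) (PiM I M) (\<lambda>y. \<lambda>i\<in>I. y i) = distr (PiM I M) (PiM I M) (\<lambda>y. y)"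
      by (rule distr_cong) (simp_all add: space_PiM PiE_restrict)
    also have "\<dots> = PiM I (\<lambda>i. distr (PiM I M) (M i) (\<lambda>y. y i))"
      by (simp add: distr_PiM_component M cong: PiM_cong)
    finally show "distr (PiM I M) (PiM I M) (\<lambda>y. \<lambda>i\<in>I. y i) = PiM I (\<lambda>i. distr (PiM I M) (M i) (\<lambda>y. y i))" .
  qed
qed

lemma distributed_PiM_normal_component:
  assumes "\<sigma> > 0" "i < n"
  shows "distributed (PiM {..<n} (\<lambda>i. density lborel (normal_density (\<mu> i) \<sigma>))) lborel (\<lambda>y. y i)
           (\<lambda>x. ennreal (normal_density (\<mu> i) \<sigma> x))"
proof -
  let ?M = "\<lambda>i. density lborel (normal_density (\<mu> i) \<sigma>)"
  have "distr (PiM {..<n} ?M) lborel (\<lambda>y. y i) = distr (PiM {..<n} ?M) (?M i) (\<lambda>y. y i)"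
    by (rule distr_cong) auto
  also have "\<dots> = ?M i"
    using assms by (intro distr_PiM_component prob_space_normal_density) auto
  finally have "distr (PiM {..<n} ?M) lborel (\<lambda>y. y i) = ?M i" .
  moreover have "(\<lambda>y. y i) \<in> measurable (PiM {..<n} ?M) lborel"
    using measurable_component_singleton[of i "{..<n}" ?M] assms
    by (simp add: measurable_cong_sets[OF refl sets_density])
  ultimately show ?thesis unfolding distributed_def by simp
qed

lemma distributed_PiM_normal_linear_form:
  fixes \<mu> v :: "nat \<Rightarrow> real"
  assumes \<sigma>: "\<sigma> > 0" and v: "\<exists>i<n. v i \<noteq> 0"
  shows "distributed (PiM {..<n} (\<lambda>i. density lborel (normal_density (\<mu> i) \<sigma>))) lborel
           (\<lambda>y. \<Sum>i<n. (y i - \<mu> i) * v i) (normal_density 0 (\<sigma> * sqrt (\<Sum>i<n. (v i)\<^sup>2)))"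
proof -
  let ?M = "\<lambda>i. density lborel (normal_density (\<mu> i) \<sigma>)"
  interpret prob_space "PiM {..<n} ?M"
    using \<sigma> by (intro prob_space_PiM prob_space_normal_density) auto
  define I where "I = {i. i < n \<and> v i \<noteq> 0}"
  have I: "I \<subseteq> {..<n}" "finite I" "I \<noteq> {}" using v unfolding I_def by auto
  have "indep_vars ?M (\<lambda>i y. y i) {..<n}"
    using \<sigma> I by (intro indep_vars_PiM_components prob_space_normal_density) auto
  then have "indep_vars (\<lambda>_. borel) (\<lambda>i y. (\<lambda>x. - (v i * \<mu> i) + v i * x) (y i)) {..<n}"
    by (rule indep_vars_compose2) (simp add: measurable_cong_sets[OF sets_density refl])
  then have indep: "indep_vars (\<lambda>_. borel) (\<lambda>i y. - (v i * \<mu> i) + v i * y i) I"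
    by (rule indep_vars_subset[OF _ I(1)])
  have "distributed (PiM {..<n} ?M) lborel (\<lambda>y. \<Sum>i\<in>I. - (v i * \<mu> i) + v i * y i)
      (normal_density (\<Sum>i\<in>I. 0) (sqrt (\<Sum>i\<in>I. (\<bar>v i\<bar> * \<sigma>)\<^sup>2)))"
  proof (rule sum_indep_normal[OF I(2,3) indep])
    fix i assume "i \<in> I"
    then have i: "i < n" "v i \<noteq> 0" by (auto simp: I_def)
    show "0 < \<bar>v i\<bar> * \<sigma>" using i \<sigma> by simp
    show "distributed (PiM {..<n} ?M) lborel (\<lambda>y. - (v i * \<mu> i) + v i * y i) (normal_density 0 (\<bar>v i\<bar> * \<sigma>))"
      using normal_density_affine[OF distributed_PiM_normal_component[OF \<sigma> i(1)] \<sigma> i(2),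
          of "- (v i * \<mu> i)"] by simp
  qed
  moreover have "(\<Sum>i\<in>I. - (v i * \<mu> i) + v i * y i) = (\<Sum>i<n. (y i - \<mu> i) * v i)" for y
    by (rule sum.mono_neutral_cong_left) (auto simp: I_def algebra_simps)
  moreover have "sqrt (\<Sum>i\<in>I. (\<bar>v i\<bar> * \<sigma>)\<^sup>2) = \<sigma> * sqrt (\<Sum>i<n. (v i)\<^sup>2)"
  proof -
    have "(\<Sum>i\<in>I. (\<bar>v i\<bar> * \<sigma>)\<^sup>2) = \<sigma>\<^sup>2 * (\<Sum>i<n. (v i)\<^sup>2)"
      by (subst sum.mono_neutral_cong_left[of "{..<n}" I])
         (auto simp: I_def power_mult_distrib sum_distrib_left mult.commute)
    then show ?thesis using \<sigma> by (simp add: real_sqrt_mult)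
  qed
  ultimately show ?thesis by simp
qed

lemma PiM_normal_linear_form_lower_tail:
  fixes \<mu> v :: "nat \<Rightarrow> real"
  assumes \<sigma>: "\<sigma> > 0" and t: "t > 0"
  shows "measure (PiM {..<n} (\<lambda>i. density lborel (normal_density (\<mu> i) \<sigma>)))
     {y \<in> space (PiM {..<n} (\<lambda>i. density lborel (normal_density (\<mu> i) \<sigma>))).
        (\<Sum>i<n. (y i - \<mu> i) * v i) \<le> -t}
     \<le> \<sigma>\<^sup>2 * (\<Sum>i<n. (v i)\<^sup>2) / t\<^sup>2"
proof (cases "\<exists>i<n. v i \<noteq> 0")
  case False
  then have "(\<Sum>i<n. (y i - \<mu> i) * v i) = 0" for y by simp
  then show ?thesis using t by (simp add: sum_nonneg)
next
  case True
  let ?P = "PiM {..<n} (\<lambda>i. density lborel (normal_density (\<mu> i) \<sigma>))"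
  let ?S = "\<lambda>y. \<Sum>i<n. (y i - \<mu> i) * v i"
  define s where "s = \<sigma> * sqrt (\<Sum>i<n. (v i)\<^sup>2)"
  interpret prob_space ?P
    using \<sigma> by (intro prob_space_PiM prob_space_normal_density) auto
  have S: "distributed ?P lborel ?S (normal_density 0 s)"
    unfolding s_def by (rule distributed_PiM_normal_linear_form[OF \<sigma> True])
  have s: "s > 0"
    unfolding s_def using True \<sigma> by (auto intro!: sum_pos2 mult_pos_pos)
  have "integrable lborel (\<lambda>x. normal_density 0 s x * (x - 0) ^ 2)"
    using s by (rule integrable_normal_moment)
  then have "integrable ?P (\<lambda>y. (?S y)\<^sup>2)"
    using distributed_integrable[OF S, of "\<lambda>x. x\<^sup>2"] by simp
  then have "prob {y \<in> space ?P. \<bar>?S y - expectation ?S\<bar> \<ge> t} \<le> variance ?S / t\<^sup>2"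
    using S t by (intro Chebyshev_inequality) (auto simp: distributed_def)
  moreover have "expectation ?S = 0" "variance ?S = s\<^sup>2"
    using normal_distributed_expectation[OF s S] normal_distributed_variance[OF s S] by simp_all
  moreover have "prob {y \<in> space ?P. ?S y \<le> -t} \<le> prob {y \<in> space ?P. \<bar>?S y\<bar> \<ge> t}"
    using S t by (intro finite_measure_mono) (auto simp: distributed_def)
  ultimately show ?thesis
    unfolding s_def using \<sigma> by (simp add: power_mult_distrib sum_nonneg)
qed

section \<open>Operator norm\<close>

lemma l2norm_nonneg: "l2norm d v \<ge> 0"
  unfolding l2norm_def by (simp add: sum_nonneg)

lemma l2norm_scale: "l2norm d (\<lambda>j. c * v j) = \<bar>c\<bar> * l2norm d v"
  unfolding l2norm_def by (simp add: power_mult_distrib sum_distrib_left[symmetric] real_sqrt_mult)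

lemma matvec_scale: "matvec p X (\<lambda>j. c * v j) = (\<lambda>i. c * matvec p X v i)"
  unfolding matvec_def by (simp add: sum_distrib_left algebra_simps)

lemma l2norm_matvec_le_frobenius:
  "l2norm n (matvec p X v) \<le> sqrt (\<Sum>i<n. \<Sum>j<p. (X i j)\<^sup>2) * l2norm p v"
proof -
  have "(\<Sum>i<n. (matvec p X v i)\<^sup>2) \<le> (\<Sum>i<n. (\<Sum>j<p. (X i j)\<^sup>2) * (\<Sum>j<p. (v j)\<^sup>2))"
    unfolding matvec_def by (intro sum_mono Cauchy_Schwarz_ineq_sum)
  then show ?thesis
    unfolding l2norm_def by (simp add: sum_distrib_right[symmetric] real_sqrt_mult[symmetric])
qed

lemma bdd_above_op_norm: "bdd_above {l2norm n (matvec p X v) | v. l2norm p v \<le> 1}"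
proof (rule bdd_aboveI, safe)
  fix v :: "nat \<Rightarrow> real" assume "l2norm p v \<le> 1"
  then show "l2norm n (matvec p X v) \<le> sqrt (\<Sum>i<n. \<Sum>j<p. (X i j)\<^sup>2)"
    using l2norm_matvec_le_frobenius[of n p X v] mult_left_le[of "l2norm p v" "sqrt (\<Sum>i<n. \<Sum>j<p. (X i j)\<^sup>2)"]
    by (simp add: sum_nonneg)
qed

lemma op_norm_nonneg: "op_norm n p X \<ge> 0"
proof -
  have "l2norm n (matvec p X (\<lambda>_. 0)) \<le> op_norm n p X"
    unfolding op_norm_def by (rule cSup_upper[OF _ bdd_above_op_norm]) (auto simp: l2norm_def)
  then show ?thesis by (simp add: l2norm_def matvec_def)
qed

lemma l2norm_matvec_le_op_norm: "l2norm n (matvec p X v) \<le> op_norm n p X * l2norm p v"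
proof (cases "l2norm p v = 0")
  case True
  then have "v j = 0" if "j < p" for j
    using that unfolding l2norm_def by (simp add: sum_nonneg_eq_0_iff)
  then have "matvec p X v i = 0" for i unfolding matvec_def by simp
  then show ?thesis using True by (simp add: l2norm_def)
next
  case False
  define t where "t = l2norm p v"
  have t: "t > 0" using False l2norm_nonneg[of p v] unfolding t_def by simp
  have "l2norm p (\<lambda>j. (1/t) * v j) = 1"
    unfolding l2norm_scale t_def[symmetric] using t by simp
  then have "l2norm n (matvec p X (\<lambda>j. (1/t) * v j)) \<le> op_norm n p X"
    unfolding op_norm_def by (intro cSup_upper[OF _ bdd_above_op_norm]) auto
  then have "(1/t) * l2norm n (matvec p X v) \<le> op_norm n p X"
    unfolding matvec_scale l2norm_scale using t by simp
  then show ?thesis using t unfolding t_def by (simp add: field_simps)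
qed

lemma sum_square_matvec_le:
  assumes X: "op_norm n p X \<le> K * sqrt (real n)" and d: "l2norm p d \<le> sqrt e2" and e2: "e2 \<ge> 0"
  shows "(\<Sum>i<n. (matvec p X d i)\<^sup>2) \<le> K\<^sup>2 * real n * e2"
proof -
  have "l2norm n (matvec p X d) \<le> op_norm n p X * l2norm p d"
    by (rule l2norm_matvec_le_op_norm)
  also have "\<dots> \<le> (K * sqrt (real n)) * sqrt e2"
    using X d op_norm_nonneg[of n p X] l2norm_nonneg[of p d] by (intro mult_mono) auto
  finally have "(l2norm n (matvec p X d))\<^sup>2 \<le> (K * sqrt (real n) * sqrt e2)\<^sup>2"
    using l2norm_nonneg by (intro power_mono) auto
  then show ?thesis
    using e2 unfolding l2norm_def by (simp add: sum_nonneg power_mult_distrib)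
qed

section \<open>Finiteness of the prior\<close>

text \<open>Finiteness, not normalisation, is what the evidence bound needs: it makes the bounded
  integrands below integrable, whereas a non-integrable integrand has Bochner integral \<open>0\<close>.\<close>

lemma nn_integral_lborel_finite_of_powr_tail:
  fixes f :: "real \<Rightarrow> real"
  assumes f: "\<And>x. 0 \<le> f x" "\<And>x. x \<le> 0 \<Longrightarrow> f x = 0"
    and head: "\<And>x. 0 < x \<Longrightarrow> x \<le> 1 \<Longrightarrow> f x \<le> c"
    and tail: "\<And>x. 1 \<le> x \<Longrightarrow> f x \<le> c * x powr e" and e: "e < -1"
  shows "(\<integral>\<^sup>+x. ennreal (f x) \<partial>lborel) < \<infinity>"
proof -
  have c: "c \<ge> 0" using head[of 1] f(1)[of 1] by simp
  have "((\<lambda>x. x powr e) has_integral -(1 powr (e+1)) / (e+1)) {1..}"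
    by (rule has_integral_powr_to_inf) (use e in auto)
  then have tail_int: "(\<integral>\<^sup>+x. ennreal (indicator {1..} x * x powr e) \<partial>lborel) < \<infinity>"
    by (subst nn_integral_has_integral_lebesgue) auto
  have "(\<integral>\<^sup>+x. ennreal (f x) \<partial>lborel)
      \<le> (\<integral>\<^sup>+x. ennreal c * indicator {0..1} x + ennreal c * ennreal (indicator {1..} x * x powr e) \<partial>lborel)"
  proof (rule nn_integral_mono)
    fix x :: real
    consider "x \<le> 0" | "0 < x" "x \<le> 1" | "1 < x" by linarith
    then show "ennreal (f x) \<le> ennreal c * indicator {0..1} x + ennreal c * ennreal (indicator {1..} x * x powr e)"
    proof cases
      case 2
      then have "ennreal (f x) \<le> ennreal c" using head by (intro ennreal_leI) simp
      then show ?thesis using 2 by (simp add: add_increasing2)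
    next
      case 3
      then have "ennreal (f x) \<le> ennreal c * ennreal (indicator {1..} x * x powr e)"
        using tail[of x] c by (simp add: ennreal_mult[symmetric])
      then show ?thesis by (simp add: add_increasing)
    qed (simp add: f)
  qed
  also have "\<dots> = ennreal c * emeasure lborel {0..1::real} + ennreal c * (\<integral>\<^sup>+x. ennreal (indicator {1..} x * x powr e) \<partial>lborel)"
    by (subst nn_integral_add) (auto simp: nn_integral_cmult nn_integral_cmult_indicator)
  also have "\<dots> < \<infinity>" using tail_int by (simp add: ennreal_mult_less_top)
  finally show ?thesis .
qed

lemma nn_integral_half_cauchy_finite:
  assumes s: "s > 0"
  shows "(\<integral>\<^sup>+x. ennreal (half_cauchy_density s x) \<partial>lborel) < \<infinity>"
proof (rule nn_integral_lborel_finite_of_powr_tail[where c = "2 / (pi * s) + 2 * s / pi" and e = "-2"])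
  show "0 \<le> half_cauchy_density s x" "x \<le> 0 \<Longrightarrow> half_cauchy_density s x = 0" for x
    using s by (simp_all add: half_cauchy_density_def)
  show "half_cauchy_density s x \<le> 2 / (pi * s) + 2 * s / pi" if "0 < x" for x
  proof -
    have "half_cauchy_density s x \<le> 2 / (pi * s * 1)"
      using s that add_pos_nonneg[OF zero_less_one zero_le_power2[of "x/s"]]
      by (auto simp: half_cauchy_density_def intro!: divide_left_mono mult_left_mono mult_pos_pos)
    moreover have "0 \<le> 2 * s / pi" using s by simp
    ultimately show ?thesis by simp
  qed
  show "half_cauchy_density s x \<le> (2 / (pi * s) + 2 * s / pi) * x powr (-2)" if "1 \<le> x" for x
  proof -
    have x: "x > 0" using that by simp
    have "half_cauchy_density s x \<le> 2 / (pi * s * (x/s)\<^sup>2)"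
      using s x add_pos_nonneg[OF zero_less_one zero_le_power2[of "x/s"]]
      by (auto simp: half_cauchy_density_def intro!: divide_left_mono mult_left_mono mult_pos_pos)
    also have "\<dots> = (2 * s / pi) * x powr (-2)"
      using s x by (simp add: powr_minus powr_realpow field_simps power2_eq_square)
    also have "\<dots> \<le> (2 / (pi * s) + 2 * s / pi) * x powr (-2)"
      using s by (intro mult_right_mono) auto
    finally show ?thesis .
  qed
qed simp

text \<open>From \<open>exp (b u) \<ge> (1 + b u / k) ^ k \<ge> (b u / k) ^ k\<close>.\<close>
lemma powr_mult_exp_neg_le:
  fixes a b u :: real
  assumes b: "b > 0" and u: "u \<ge> 1" and k: "a \<le> real k" "k > 0"
  shows "u powr a * exp (-(b*u)) \<le> (real k / b) ^ k"
proof -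
  have "u powr a \<le> u ^ k"
    using u k powr_mono[of a "real k" u] by (simp add: powr_realpow)
  moreover have "(b*u/real k) ^ k \<le> exp (b*u)"
  proof -
    have "(b*u/real k) ^ k \<le> (1 + b*u/real k) ^ k"
      using b u by (intro power_mono) auto
    also have "\<dots> \<le> exp (b*u)"
    proof (rule exp_ge_one_plus_x_over_n_power_n)
      show "- real k \<le> b*u" using mult_nonneg_nonneg[of b u] b u by linarith
    qed (use k in simp)
    finally show ?thesis .
  qed
  ultimately have "u powr a * exp (-(b*u)) \<le> u ^ k / ((b*u/real k) ^ k)"
    using b u k by (simp add: exp_minus divide_inverse[symmetric] frac_le)
  also have "\<dots> = (real k / b) ^ k" using b u k by (simp add: field_simps power_divide)
  finally show ?thesis .
qed

lemma nn_integral_inv_gamma_finite: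
  assumes a: "a > 0" and b: "b > 0"
  shows "(\<integral>\<^sup>+x. ennreal (inv_gamma_density a b x) \<partial>lborel) < \<infinity>"
proof -
  define k where "k = nat \<lceil>a+1\<rceil>"
  have k: "a + 1 \<le> real k" "k > 0" unfolding k_def using a by linarith+
  define K0 where "K0 = b powr a / Gamma a"
  have K0: "K0 > 0" unfolding K0_def using a b by (simp add: Gamma_real_pos)
  have dens: "inv_gamma_density a b x = K0 * (x powr (-a-1) * exp (-b/x))" if "x > 0" for x
    using that unfolding inv_gamma_density_def K0_def by simp
  show ?thesis
  proof (rule nn_integral_lborel_finite_of_powr_tail[where c = "K0 * (real k / b) ^ k + K0" and e = "-a-1"])
    show "0 \<le> inv_gamma_density a b x" "x \<le> 0 \<Longrightarrow> inv_gamma_density a b x = 0" for x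
      using a b by (simp_all add: inv_gamma_density_def Gamma_real_pos)
    show "inv_gamma_density a b x \<le> K0 * (real k / b) ^ k + K0" if "0 < x" "x \<le> 1" for x
    proof -
      have "x powr (-a-1) * exp (-b/x) = (1/x) powr (a+1) * exp (-(b*(1/x)))"
        using that by (simp add: powr_divide powr_minus_divide[symmetric] powr_minus)
      also have "\<dots> \<le> (real k / b) ^ k"
        using that by (intro powr_mult_exp_neg_le b k) auto
      finally show ?thesis using that K0 b by (simp add: dens mult_left_mono add_increasing2)
    qed
    show "inv_gamma_density a b x \<le> (K0 * (real k / b) ^ k + K0) * x powr (-a-1)" if "1 \<le> x" for x
    proof -
      have "x powr (-a-1) * exp (-b/x) \<le> x powr (-a-1)"
        using that b by (intro mult_left_le) auto
      then have "inv_gamma_density a b x \<le> K0 * x powr (-a-1)"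
        using that K0 by (simp add: dens mult_left_mono)
      also have "\<dots> \<le> (K0 * (real k / b) ^ k + K0) * x powr (-a-1)"
        using K0 b by (intro mult_right_mono) auto
      finally show ?thesis .
    qed
  qed (use a in simp)
qed

lemma nn_integral_half_normal_finite:
  assumes v: "v > 0"
  shows "(\<integral>\<^sup>+x. ennreal (half_normal_density v x) \<partial>lborel) < \<infinity>"
proof -
  have "(\<integral>\<^sup>+x. ennreal (half_normal_density v x) \<partial>lborel)
      \<le> (\<integral>\<^sup>+x. 2 * ennreal (normal_density 0 (sqrt v) x) \<partial>lborel)"
    by (rule nn_integral_mono) (auto simp: half_normal_density_def ennreal_mult)
  also have "\<dots> = 2"
    using prob_space.emeasure_space_1[OF prob_space_normal_density[of "sqrt v" 0]] v
    by (simp add: nn_integral_cmult emeasure_density)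
  finally show ?thesis by (simp add: order.strict_trans1)
qed

lemma finite_measure_PiM_const:
  assumes "finite A" "finite_measure N"
  shows "finite_measure (PiM A (\<lambda>_. N))"
proof (rule finite_measureI)
  interpret N: finite_measure N by fact
  interpret product_sigma_finite "\<lambda>_. N" by standard
  have "emeasure (PiM A (\<lambda>_. N)) (space (PiM A (\<lambda>_. N))) = (\<Prod>i\<in>A. emeasure N (space N))"
    unfolding space_PiM by (rule emeasure_PiM) (use assms in auto)
  then show "emeasure (PiM A (\<lambda>_. N)) (space (PiM A (\<lambda>_. N))) \<noteq> \<infinity>"
    using N.emeasure_finite by (simp add: power_eq_top_ennreal)
qed

lemma finite_measure_density_lborel:
  assumes "f \<in> borel_measurable borel" "(\<integral>\<^sup>+x. ennreal (f x) \<partial>lborel) < \<infinity>"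
  shows "finite_measure (density lborel f)"
  by (rule finite_measureI) (use assms in \<open>simp add: emeasure_density\<close>)

lemma finite_measure_ghs_hyper:
  assumes "finite A" "tau0 > 0" "ac > 0" "bc > 0" "sig_eta > 0"
  shows "finite_measure (ghs_hyper A tau0 ac bc sig_eta)"
proof -
  have "half_cauchy_density s \<in> borel_measurable borel" for s
    unfolding half_cauchy_density_def by measurable
  moreover have "inv_gamma_density a b \<in> borel_measurable borel" for a b
    unfolding inv_gamma_density_def by measurable
  moreover have "half_normal_density v \<in> borel_measurable borel" for v
    unfolding half_normal_density_def by measurable
  ultimately show ?thesis
    unfolding ghs_hyper_def using assms
    by (intro finite_measure_pair_measure finite_measure_PiM_const finite_measure_density_lborel
          nn_integral_half_cauchy_finite nn_integral_inv_gamma_finite nn_integral_half_normal_finite)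
       simp_all
qed

text \<open>No measurability of the kernel is needed: \<open>bind\<close> is a \<open>join\<close> of subprobability
  measures, so its total mass is at most that of the base measure.\<close>
lemma emeasure_bind_le_space: "emeasure (M \<bind> f) B \<le> emeasure M (space M)"
proof (cases "space M = {}")
  case True
  then show ?thesis using emeasure_space[of "count_space {}" B] by (simp add: bind_def)
next
  case False
  define D where "D = distr M (subprob_algebra (f (SOME x. x \<in> space M))) f"
  have "emeasure (M \<bind> f) B \<le> (\<integral>\<^sup>+ M'. emeasure M' B \<partial>D)"
    using False unfolding bind_def D_def join_def by (simp add: emeasure_measure_of_conv)
  also have "\<dots> \<le> (\<integral>\<^sup>+ M'. 1 \<partial>D)"
    by (intro nn_integral_mono subprob_space.subprob_emeasure_le_1)
       (simp add: D_def space_subprob_algebra)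
  also have "\<dots> = emeasure D (space D)" by simp
  also have "\<dots> \<le> emeasure M (space M)"
    unfolding D_def distr_def by (auto simp: emeasure_measure_of_conv intro: emeasure_space)
  finally show ?thesis .
qed

lemma finite_measure_ghs_prior:
  assumes "finite A" "tau0 > 0" "ac > 0" "bc > 0" "sig_eta > 0"
  shows "finite_measure (ghs_prior sigma0 tau0 ac bc sig_eta z A)"
proof (rule finite_measureI)
  interpret H: finite_measure "ghs_hyper A tau0 ac bc sig_eta"
    using assms by (rule finite_measure_ghs_hyper)
  have "emeasure (ghs_prior sigma0 tau0 ac bc sig_eta z A) (space (ghs_prior sigma0 tau0 ac bc sig_eta z A))
      \<le> emeasure (ghs_hyper A tau0 ac bc sig_eta) (space (ghs_hyper A tau0 ac bc sig_eta))"
    unfolding ghs_prior_def by (rule emeasure_bind_le_space)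
  then show "emeasure (ghs_prior sigma0 tau0 ac bc sig_eta z A) (space (ghs_prior sigma0 tau0 ac bc sig_eta z A)) \<noteq> \<infinity>"
    using H.emeasure_finite by (auto simp: top_unique)
qed

lemma sets_ghs_prior: "sets (ghs_prior sigma0 tau0 ac bc sig_eta z A) = sets (PiM A (\<lambda>_. lborel))"
proof -
  have "(restrict (\<lambda>_. 0) A, 0, 0, 0) \<in> space (ghs_hyper A tau0 ac bc sig_eta)"
    unfolding ghs_hyper_def by (simp add: space_pair_measure space_PiM)
  then show ?thesis
    unfolding ghs_prior_def by (subst sets_bind) (auto intro!: sets_PiM_cong)
qed

section \<open>Conditional means and Jensen\<close>

lemma set_integrable_sum:
  fixes f :: "'i \<Rightarrow> 'a \<Rightarrow> real"
  assumes "\<And>i. i \<in> I \<Longrightarrow> set_integrable M B (f i)"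
  shows "set_integrable M B (\<lambda>x. \<Sum>i\<in>I. f i x)"
  using assms unfolding set_integrable_def by (simp add: sum_distrib_left)

definition cond_mean :: "'a measure \<Rightarrow> 'a set \<Rightarrow> ('a \<Rightarrow> real) \<Rightarrow> real" where
  "cond_mean M B f = (LINT x:B|M. f x) / measure M B"

lemma cond_mean_cmult: "cond_mean M B (\<lambda>x. c * f x) = c * cond_mean M B f"
  unfolding cond_mean_def by simp

lemma cond_mean_sum:
  assumes "\<And>i. i \<in> I \<Longrightarrow> set_integrable M B (f i)"
  shows "cond_mean M B (\<lambda>x. \<Sum>i\<in>I. f i x) = (\<Sum>i\<in>I. cond_mean M B (f i))"
  using assms unfolding cond_mean_def set_lebesgue_integral_def set_integrable_def
  by (simp add: sum_distrib_left sum_divide_distrib)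

lemma cond_mean_mono:
  assumes "set_integrable M B f" "set_integrable M B g" "\<And>x. x \<in> B \<Longrightarrow> f x \<le> g x"
  shows "cond_mean M B f \<le> cond_mean M B g"
  unfolding cond_mean_def using assms by (intro divide_right_mono set_integral_mono) auto

context finite_measure
begin

lemma set_integrable_bounded:
  fixes f :: "'a \<Rightarrow> real"
  assumes "B \<in> sets M" "f \<in> borel_measurable M" "\<And>x. x \<in> B \<Longrightarrow> \<bar>f x\<bar> \<le> c"
  shows "set_integrable M B f"
  unfolding set_integrable_def
proof (rule integrable_const_bound[where B="\<bar>c\<bar>"])
  show "AE x in M. norm (indicator B x *\<^sub>R f x) \<le> \<bar>c\<bar>"
    using assms(3) by (intro AE_I2) (auto split: split_indicator intro: order_trans[OF _ abs_ge_self])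
qed (use assms in auto)

lemma cond_mean_const:
  fixes c :: real
  assumes "B \<in> sets M" "measure M B > 0"
  shows "cond_mean M B (\<lambda>_. c) = c"
  unfolding cond_mean_def using assms by (simp add: set_integral_const emeasure_finite)

lemma cond_mean_affine:
  assumes B: "B \<in> sets M" "measure M B > 0" and f: "set_integrable M B f"
  shows "cond_mean M B (\<lambda>x. a * f x + b) = a * cond_mean M B f + b"
proof -
  have "set_integrable M B (\<lambda>_. b)"
    using B by (intro set_integrable_bounded) auto
  then have "(LINT x:B|M. a * f x + b) = a * (LINT x:B|M. f x) + (LINT x:B|M. b)"
    using f by (simp add: set_integral_add)
  then show ?thesis
    using B by (simp add: cond_mean_def set_integral_const emeasure_finite add_divide_distrib)
qed

text \<open>The affine function below is the tangent of \<open>exp\<close> at the average of \<open>g\<close>.\<close>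
lemma measure_mult_exp_cond_mean_le:
  assumes B: "B \<in> sets M" "measure M B > 0"
    and g: "g \<in> borel_measurable M" "\<And>x. x \<in> space M \<Longrightarrow> g x \<le> U" "set_integrable M B g"
  shows "measure M B * exp (cond_mean M B g) \<le> (\<integral>x. exp (g x) \<partial>M)"
proof -
  define m where "m = cond_mean M B g"
  have exp_bounded: "\<bar>exp (g x)\<bar> \<le> exp U" if "x \<in> space M" for x
    using g(2)[OF that] by simp
  have int_const: "set_integrable M B (\<lambda>_. exp m * (1 - m))"
    using B by (intro set_integrable_bounded) auto
  have "cond_mean M B (\<lambda>x. exp m * g x + exp m * (1 - m)) = exp m"
    unfolding cond_mean_affine[OF B g(3)] m_def[symmetric] by (simp add: algebra_simps)
  then have "measure M B * exp m = (LINT x:B|M. exp m * g x + exp m * (1 - m))"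
    using B by (simp add: cond_mean_def divide_eq_eq mult.commute)
  also have "\<dots> \<le> (LINT x:B|M. exp (g x))"
  proof (rule set_integral_mono)
    show "set_integrable M B (\<lambda>x. exp m * g x + exp m * (1 - m))"
      using g(3) int_const by auto
    show "set_integrable M B (\<lambda>x. exp (g x))"
      using B g(1) exp_bounded sets.sets_into_space[OF B(1)]
      by (intro set_integrable_bounded[where c="exp U"]) auto
    show "exp m * g x + exp m * (1 - m) \<le> exp (g x)" for x
      using mult_left_mono[OF exp_ge_add_one_self[of "g x - m"], of "exp m"]
      by (simp add: algebra_simps exp_diff)
  qed
  also have "\<dots> \<le> (\<integral>x. exp (g x) \<partial>M)"
    unfolding set_lebesgue_integral_def
  proof (rule integral_mono)
    show int_exp: "integrable M (\<lambda>x. exp (g x))"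
      using g(1) exp_bounded by (intro integrable_const_bound[where B="exp U"]) auto
    show "integrable M (\<lambda>x. indicator B x *\<^sub>R exp (g x))"
      using B(1) int_exp by (rule integrable_mult_indicator)
  qed (auto split: split_indicator)
  finally show ?thesis unfolding m_def .
qed

lemma cond_mean_square_le:
  assumes B: "B \<in> sets M" "measure M B > 0"
    and f: "set_integrable M B f" "set_integrable M B (\<lambda>x. (f x)\<^sup>2)"
  shows "(cond_mean M B f)\<^sup>2 \<le> cond_mean M B (\<lambda>x. (f x)\<^sup>2)"
proof -
  define v where "v = cond_mean M B f"
  have int_const: "set_integrable M B (\<lambda>_. - v\<^sup>2)"
    using B by (intro set_integrable_bounded) auto
  have "v\<^sup>2 = cond_mean M B (\<lambda>x. 2 * v * f x + - v\<^sup>2)"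
    unfolding cond_mean_affine[OF B f(1)] v_def[symmetric] by (simp add: power2_eq_square)
  also have "\<dots> \<le> cond_mean M B (\<lambda>x. (f x)\<^sup>2)"
  proof (rule cond_mean_mono[OF _ f(2)])
    show "set_integrable M B (\<lambda>x. 2 * v * f x + - v\<^sup>2)"
      using f(1) int_const by (intro set_integral_add(1)) auto
    show "2 * v * f x + - v\<^sup>2 \<le> (f x)\<^sup>2" for x
      using sum_squares_bound[of v "f x"] by simp
  qed
  finally show ?thesis unfolding v_def .
qed

lemma set_integrable_if_sum_squares_bounded:
  fixes r :: "nat \<Rightarrow> 'a \<Rightarrow> real"
  assumes B: "B \<in> sets M" and r: "\<And>i. r i \<in> borel_measurable M"
    and R: "\<And>x. x \<in> B \<Longrightarrow> (\<Sum>i<n. (r i x)\<^sup>2) \<le> R" and i: "i < n"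
  shows "set_integrable M B (r i)" "set_integrable M B (\<lambda>x. (r i x)\<^sup>2)"
proof -
  have sq: "(r i x)\<^sup>2 \<le> R" if "x \<in> B" for x
    using R[OF that] member_le_sum[of i "{..<n}" "\<lambda>i. (r i x)\<^sup>2"] i by simp
  then show "set_integrable M B (r i)"
    using B r by (intro set_integrable_bounded[where c="sqrt R"]) (auto simp: real_le_rsqrt)
  show "set_integrable M B (\<lambda>x. (r i x)\<^sup>2)"
    using B r sq by (intro set_integrable_bounded[where c=R]) auto
qed

lemma sum_cond_mean_square_le:
  fixes r :: "nat \<Rightarrow> 'a \<Rightarrow> real"
  assumes B: "B \<in> sets M" "measure M B > 0" and r: "\<And>i. r i \<in> borel_measurable M"
    and R: "\<And>x. x \<in> B \<Longrightarrow> (\<Sum>i<n. (r i x)\<^sup>2) \<le> R"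
  shows "(\<Sum>i<n. (cond_mean M B (r i))\<^sup>2) \<le> R"
proof -
  note int = set_integrable_if_sum_squares_bounded[OF B(1) r R]
  have "(\<Sum>i<n. (cond_mean M B (r i))\<^sup>2) \<le> (\<Sum>i<n. cond_mean M B (\<lambda>x. (r i x)\<^sup>2))"
    using B int by (intro sum_mono cond_mean_square_le) auto
  also have "\<dots> = cond_mean M B (\<lambda>x. \<Sum>i<n. (r i x)\<^sup>2)"
    using int by (intro cond_mean_sum[symmetric]) auto
  also have "\<dots> \<le> cond_mean M B (\<lambda>_. R)"
  proof (rule cond_mean_mono)
    show "set_integrable M B (\<lambda>x. \<Sum>i<n. (r i x)\<^sup>2)"
      using int by (intro set_integrable_sum) auto
    show "set_integrable M B (\<lambda>_. R)"
      using B by (intro set_integrable_bounded) auto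
  qed (use R in auto)
  finally show ?thesis using B by (simp add: cond_mean_const)
qed

lemma measure_mult_exp_le_integral_exp_tilt:
  fixes r :: "nat \<Rightarrow> 'a \<Rightarrow> real"
  assumes B: "B \<in> sets M" "measure M B > 0" and r: "\<And>i. r i \<in> borel_measurable M"
    and R: "\<And>x. x \<in> B \<Longrightarrow> (\<Sum>i<n. (r i x)\<^sup>2) \<le> R" and \<sigma>: "\<sigma> > 0"
  shows "measure M B * exp ((\<Sum>i<n. e i * cond_mean M B (r i)) / \<sigma>\<^sup>2 - R / (2 * \<sigma>\<^sup>2))
    \<le> (\<integral>x. exp (\<Sum>i<n. (2 * e i * r i x - (r i x)\<^sup>2) / (2 * \<sigma>\<^sup>2)) \<partial>M)"
proof -
  note int = set_integrable_if_sum_squares_bounded[OF B(1) r R]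
  note r[measurable]
  define lin where "lin x = (\<Sum>i<n. (e i / \<sigma>\<^sup>2) * r i x)" for x
  define g where "g x = (\<Sum>i<n. (2 * e i * r i x - (r i x)\<^sup>2) / (2 * \<sigma>\<^sup>2))" for x
  have g_eq: "g x = lin x - (\<Sum>i<n. (r i x)\<^sup>2) / (2 * \<sigma>\<^sup>2)" for x
    unfolding g_def lin_def using \<sigma>
    by (simp add: sum_subtractf[symmetric] sum_divide_distrib field_simps power2_eq_square)
  have int_lin: "set_integrable M B lin"
    unfolding lin_def using int by (intro set_integrable_sum) auto
  have int_g: "set_integrable M B g"
    unfolding g_def using int by (intro set_integrable_sum) auto
  have int_const: "set_integrable M B (\<lambda>_. - R / (2 * \<sigma>\<^sup>2))"
    using B by (intro set_integrable_bounded) auto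
  have "cond_mean M B lin = (\<Sum>i<n. (e i / \<sigma>\<^sup>2) * cond_mean M B (r i))"
    unfolding lin_def using int by (subst cond_mean_sum) (simp_all only: cond_mean_cmult, auto)
  then have "(\<Sum>i<n. e i * cond_mean M B (r i)) / \<sigma>\<^sup>2 - R / (2 * \<sigma>\<^sup>2)
      = cond_mean M B (\<lambda>x. 1 * lin x + - R / (2 * \<sigma>\<^sup>2))"
    unfolding cond_mean_affine[OF B int_lin] by (simp add: sum_divide_distrib)
  also have "\<dots> \<le> cond_mean M B g"
  proof (rule cond_mean_mono[OF _ int_g])
    show "set_integrable M B (\<lambda>x. 1 * lin x + - R / (2 * \<sigma>\<^sup>2))"
      using int_lin int_const by (intro set_integral_add(1)) auto
    show "1 * lin x + - R / (2 * \<sigma>\<^sup>2) \<le> g x" if "x \<in> B" for x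
      using R[OF that] \<sigma> by (simp add: g_eq divide_right_mono)
  qed
  finally have "measure M B * exp ((\<Sum>i<n. e i * cond_mean M B (r i)) / \<sigma>\<^sup>2 - R / (2 * \<sigma>\<^sup>2))
      \<le> measure M B * exp (cond_mean M B g)"
    using B by (intro mult_left_mono) auto
  also have "\<dots> \<le> (\<integral>x. exp (g x) \<partial>M)"
  proof (rule measure_mult_exp_cond_mean_le[OF B _ _ int_g])
    show "g \<in> borel_measurable M" unfolding g_def by measurable
    show "g x \<le> (\<Sum>i<n. (e i)\<^sup>2 / (2 * \<sigma>\<^sup>2))" for x
    proof -
      have "2 * e i * r i x - (r i x)\<^sup>2 \<le> (e i)\<^sup>2" for i
        using sum_squares_bound[of "e i" "r i x"] by simp
      then show ?thesis unfolding g_def by (intro sum_mono divide_right_mono) auto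
    qed
  qed
  finally show ?thesis unfolding g_def .
qed

end

section \<open>Lower bound for the evidence\<close>

lemma normal_density_ratio:
  assumes "\<sigma> > 0"
  shows "normal_density (a + d) \<sigma> y / normal_density a \<sigma> y = exp ((2 * (y - a) * d - d\<^sup>2) / (2 * \<sigma>\<^sup>2))"
proof -
  have "normal_density (a + d) \<sigma> y / normal_density a \<sigma> y
      = exp (-(y - (a + d))\<^sup>2 / (2 * \<sigma>\<^sup>2) - (-(y - a)\<^sup>2 / (2 * \<sigma>\<^sup>2)))"
    using assms by (simp add: normal_density_def exp_diff[symmetric])
  also have "-(y - (a + d))\<^sup>2 / (2 * \<sigma>\<^sup>2) - (-(y - a)\<^sup>2 / (2 * \<sigma>\<^sup>2)) = (2 * (y - a) * d - d\<^sup>2) / (2 * \<sigma>\<^sup>2)"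
    using assms by (simp add: field_simps power2_eq_square)
  finally show ?thesis .
qed

lemma lik_ratio:
  assumes "\<sigma> > 0"
  shows "lik n p X \<sigma> b y / lik n p X \<sigma> b0 y
     = exp (\<Sum>i<n. (2 * (y i - matvec p X b0 i) * matvec p X (\<lambda>j. b j - b0 j) i
                      - (matvec p X (\<lambda>j. b j - b0 j) i)\<^sup>2) / (2 * \<sigma>\<^sup>2))"
proof -
  have "matvec p X b i = matvec p X b0 i + matvec p X (\<lambda>j. b j - b0 j) i" for i
    unfolding matvec_def by (simp add: sum.distrib[symmetric] algebra_simps)
  then have "lik n p X \<sigma> b y / lik n p X \<sigma> b0 y
      = (\<Prod>i<n. exp ((2 * (y i - matvec p X b0 i) * matvec p X (\<lambda>j. b j - b0 j) i
                      - (matvec p X (\<lambda>j. b j - b0 j) i)\<^sup>2) / (2 * \<sigma>\<^sup>2)))"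
    unfolding lik_def prod_dividef[symmetric] by (simp only: normal_density_ratio[OF assms])
  then show ?thesis by (simp add: exp_sum)
qed

lemma borel_measurable_ext_coef: "(\<lambda>b. ext_coef A b j) \<in> borel_measurable (PiM A (\<lambda>_. lborel))"
proof (cases "j \<in> A")
  case True
  then have "(\<lambda>b. b j) \<in> measurable (PiM A (\<lambda>_. lborel)) lborel"
    by (rule measurable_component_singleton)
  then show ?thesis using True by (simp add: ext_coef_def measurable_cong_sets[OF refl sets_lborel])
qed (simp add: ext_coef_def)

lemma Dn_ge_cond_mean:
  fixes Pi :: "(nat \<Rightarrow> real) measure" and X :: "nat \<Rightarrow> nat \<Rightarrow> real" and b0 :: "nat \<Rightarrow> real"
  assumes Pi: "finite_measure Pi" "sets Pi = sets (PiM A (\<lambda>_. lborel))"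
    and B: "B = {b \<in> space Pi. l2norm p (\<lambda>j. ext_coef A b j - b0 j) \<le> sqrt e2}" "measure Pi B > 0"
    and X: "op_norm n p X \<le> K * sqrt (real n)" and e2: "e2 \<ge> 0" and \<sigma>: "\<sigma> > 0"
  defines "v \<equiv> \<lambda>i. cond_mean Pi B (\<lambda>b. matvec p X (\<lambda>j. ext_coef A b j - b0 j) i)"
  shows "(\<Sum>i<n. (v i)\<^sup>2) \<le> K\<^sup>2 * real n * e2"
    and "measure Pi B * exp ((\<Sum>i<n. (y i - matvec p X b0 i) * v i) / \<sigma>\<^sup>2 - K\<^sup>2 * real n * e2 / (2 * \<sigma>\<^sup>2))
         \<le> Dn n p X \<sigma> b0 Pi A y"
proof -
  interpret finite_measure Pi by (rule Pi(1))
  define r where "r = (\<lambda>i b. matvec p X (\<lambda>j. ext_coef A b j - b0 j) i)"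
  have Bsets: "B \<in> sets Pi"
    using B(2) measure_notin_sets by fastforce
  have r: "r i \<in> borel_measurable Pi" for i
  proof -
    have [measurable]: "(\<lambda>b. ext_coef A b j) \<in> borel_measurable Pi" for j
      using borel_measurable_ext_coef by (subst measurable_cong_sets[OF Pi(2) refl])
    show ?thesis unfolding r_def matvec_def by measurable
  qed
  have R: "(\<Sum>i<n. (r i b)\<^sup>2) \<le> K\<^sup>2 * real n * e2" if "b \<in> B" for b
    unfolding r_def using that B(1) X e2 by (intro sum_square_matvec_le) auto
  have v: "v = (\<lambda>i. cond_mean Pi B (r i))" unfolding v_def r_def ..
  show "(\<Sum>i<n. (v i)\<^sup>2) \<le> K\<^sup>2 * real n * e2"
    unfolding v using Bsets B(2) r R by (rule sum_cond_mean_square_le)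
  have Dn_eq: "Dn n p X \<sigma> b0 Pi A y
      = (\<integral>b. exp (\<Sum>i<n. (2 * (y i - matvec p X b0 i) * r i b - (r i b)\<^sup>2) / (2 * \<sigma>\<^sup>2)) \<partial>Pi)"
    unfolding Dn_def r_def lik_ratio[OF \<sigma>] ..
  show "measure Pi B * exp ((\<Sum>i<n. (y i - matvec p X b0 i) * v i) / \<sigma>\<^sup>2 - K\<^sup>2 * real n * e2 / (2 * \<sigma>\<^sup>2))
         \<le> Dn n p X \<sigma> b0 Pi A y"
    unfolding v Dn_eq by (rule measure_mult_exp_le_integral_exp_tilt[OF Bsets B(2) r R \<sigma>])
qed

lemma Dn_lower_bound_on_event:
  fixes Pi :: "(nat \<Rightarrow> real) measure" and X :: "nat \<Rightarrow> nat \<Rightarrow> real" and b0 :: "nat \<Rightarrow> real"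
  assumes Pi: "finite_measure Pi" "sets Pi = sets (PiM A (\<lambda>_. lborel))"
    and conc: "measure Pi {b \<in> space Pi. l2norm p (\<lambda>j. ext_coef A b j - b0 j) \<le> sqrt e2}
                 \<ge> exp (- C1 * real n * e2)"
    and X: "op_norm n p X \<le> K * sqrt (real n)" and N: "real n * e2 > 0"
    and \<sigma>: "\<sigma> > 0" and \<delta>: "\<delta> > 0"
  shows "\<exists>\<Omega> \<in> sets (data_law n p X \<sigma> b0).
           measure (data_law n p X \<sigma> b0) (space (data_law n p X \<sigma> b0) - \<Omega>)
             \<le> K\<^sup>2 / (\<delta>\<^sup>2 * \<sigma>\<^sup>2) / (real n * e2)
         \<and> (\<forall>y \<in> \<Omega>. exp (- (C1 + K\<^sup>2 / (2 * \<sigma>\<^sup>2) + \<delta>) * real n * e2) \<le> Dn n p X \<sigma> b0 Pi A y)"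
proof -
  define B where "B = {b \<in> space Pi. l2norm p (\<lambda>j. ext_coef A b j - b0 j) \<le> sqrt e2}"
  define v where "v i = cond_mean Pi B (\<lambda>b. matvec p X (\<lambda>j. ext_coef A b j - b0 j) i)" for i
  define \<mu> where "\<mu> = matvec p X b0"
  define S where "S y = (\<Sum>i<n. (y i - \<mu> i) * v i)" for y
  define t where "t = \<delta> * \<sigma>\<^sup>2 * (real n * e2)"
  define \<Omega> where "\<Omega> = {y \<in> space (data_law n p X \<sigma> b0). - t < S y}"
  have e2: "e2 \<ge> 0" using N by (simp add: zero_less_mult_iff)
  have t: "t > 0" unfolding t_def using N \<sigma> \<delta> by simp
  have PB: "measure Pi B > 0" using conc unfolding B_def by (meson exp_gt_zero less_le_trans)
  note bounds = Dn_ge_cond_mean[OF Pi B_def PB X e2 \<sigma>, folded v_def]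
  have law: "data_law n p X \<sigma> b0 = PiM {..<n} (\<lambda>i. density lborel (normal_density (\<mu> i) \<sigma>))"
    unfolding data_law_def \<mu>_def ..
  show ?thesis
  proof (intro bexI conjI ballI)
    have "sets (data_law n p X \<sigma> b0) = sets (PiM {..<n} (\<lambda>_. lborel))"
      unfolding law by (intro sets_PiM_cong) auto
    then have "S \<in> borel_measurable (data_law n p X \<sigma> b0)"
      unfolding S_def by (subst measurable_cong_sets[OF _ refl]) measurable
    then show "\<Omega> \<in> sets (data_law n p X \<sigma> b0)" unfolding \<Omega>_def by measurable
    have "space (data_law n p X \<sigma> b0) - \<Omega> = {y \<in> space (data_law n p X \<sigma> b0). S y \<le> - t}"
      unfolding \<Omega>_def by auto
    then have "measure (data_law n p X \<sigma> b0) (space (data_law n p X \<sigma> b0) - \<Omega>)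
        \<le> \<sigma>\<^sup>2 * (\<Sum>i<n. (v i)\<^sup>2) / t\<^sup>2"
      unfolding law S_def by (simp add: PiM_normal_linear_form_lower_tail[OF \<sigma> t])
    also have "\<dots> \<le> \<sigma>\<^sup>2 * (K\<^sup>2 * real n * e2) / t\<^sup>2"
      using bounds(1) by (intro divide_right_mono mult_left_mono) auto
    also have "\<dots> = K\<^sup>2 / (\<delta>\<^sup>2 * \<sigma>\<^sup>2) / (real n * e2)"
      unfolding t_def using \<sigma> \<delta> N by (simp add: field_simps power2_eq_square)
    finally show "measure (data_law n p X \<sigma> b0) (space (data_law n p X \<sigma> b0) - \<Omega>)
        \<le> K\<^sup>2 / (\<delta>\<^sup>2 * \<sigma>\<^sup>2) / (real n * e2)" .
  next
    fix y assume "y \<in> \<Omega>"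
    then have "- (\<delta> * (real n * e2)) \<le> S y / \<sigma>\<^sup>2"
      unfolding \<Omega>_def t_def using \<sigma> by (simp add: field_simps)
    then have "exp (- (C1 + K\<^sup>2 / (2 * \<sigma>\<^sup>2) + \<delta>) * real n * e2)
        \<le> exp (- C1 * real n * e2) * exp (S y / \<sigma>\<^sup>2 - K\<^sup>2 * real n * e2 / (2 * \<sigma>\<^sup>2))"
      by (simp add: exp_add[symmetric] algebra_simps)
    also have "\<dots> \<le> measure Pi B * exp (S y / \<sigma>\<^sup>2 - K\<^sup>2 * real n * e2 / (2 * \<sigma>\<^sup>2))"
      using conc unfolding B_def by (intro mult_right_mono) auto
    also have "\<dots> \<le> Dn n p X \<sigma> b0 Pi A y"
      using bounds(2) unfolding S_def \<mu>_def .
    finally show "exp (- (C1 + K\<^sup>2 / (2 * \<sigma>\<^sup>2) + \<delta>) * real n * e2) \<le> Dn n p X \<sigma> b0 Pi A y" .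
  qed
qed

lemma uniform_high_probability_events:
  fixes D :: "nat \<Rightarrow> 'a measure" and \<A> :: "nat \<Rightarrow> 'b set" and bound :: "nat \<Rightarrow> real"
  assumes good: "eventually good sequentially" and bound: "bound \<longlonglongrightarrow> 0"
    and events: "\<And>n A. good n \<Longrightarrow> A \<in> \<A> n \<Longrightarrow>
      \<exists>\<omega> \<in> sets (D n). measure (D n) (space (D n) - \<omega>) \<le> bound n \<and> (\<forall>y \<in> \<omega>. P n A y)"
  shows "\<exists>\<Omega>. (\<forall>n A. \<Omega> n A \<in> sets (D n))
    \<and> (\<forall>e>0. \<forall>\<^sub>F n in sequentially. \<forall>A \<in> \<A> n. measure (D n) (space (D n) - \<Omega> n A) \<le> e)
    \<and> (\<forall>n. \<forall>A \<in> \<A> n. \<forall>y \<in> \<Omega> n A. P n A y)"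
proof -
  have "\<exists>\<omega> \<in> sets (D n). (good n \<and> A \<in> \<A> n \<longrightarrow> measure (D n) (space (D n) - \<omega>) \<le> bound n)
           \<and> (\<forall>y \<in> \<omega>. P n A y)" for n A
    using events[of n A] by (cases "good n \<and> A \<in> \<A> n") (auto intro: bexI[of _ "{}"])
  then obtain \<Omega> where \<Omega>: "\<And>n A. \<Omega> n A \<in> sets (D n)"
      "\<And>n A. good n \<Longrightarrow> A \<in> \<A> n \<Longrightarrow> measure (D n) (space (D n) - \<Omega> n A) \<le> bound n"
      "\<And>n A y. y \<in> \<Omega> n A \<Longrightarrow> P n A y"
    by metis
  have "\<forall>\<^sub>F n in sequentially. \<forall>A \<in> \<A> n. measure (D n) (space (D n) - \<Omega> n A) \<le> e" if "e > 0" for e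
    using good order_tendstoD(2)[OF bound that]
    by eventually_elim (auto intro: order_trans[OF \<Omega>(2)])
  then show ?thesis using \<Omega>(1,3) by blast
qed

theorem lemma2:
  fixes p :: "nat \<Rightarrow> nat"
    and X :: "nat \<Rightarrow> nat \<Rightarrow> nat \<Rightarrow> real"
    and b0 :: "nat \<Rightarrow> nat \<Rightarrow> real"
    and z :: "nat \<Rightarrow> nat \<Rightarrow> real"
    and L :: "nat \<Rightarrow> real"
    and sigma0 tau0 ac bc sig_eta C :: real
    and s0 m eps2 :: "nat \<Rightarrow> real"
  defines "s0 \<equiv> (\<lambda>n. real (card (support (p n) (b0 n))))"
    and "m \<equiv> (\<lambda>n. C * s0 n * L n)"
    and "eps2 \<equiv> (\<lambda>n. s0 n * ln (m n) / real n)"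
  assumes sigma0_pos: "sigma0 > 0"
    and hyper_pos: "tau0 > 0" "ac > 0" "bc > 0" "sig_eta > 0"
    and C_pos: "C > 0"
    and L_pos: "\<And>n. L n > 0"
    and L_polylog: "\<exists>k::nat. \<exists>K. \<forall>\<^sub>F n in sequentially. L n \<le> K * (ln (real (p n))) ^ k"
    and A1a: "(\<lambda>n. s0 n * ln (real (p n)) / real n) \<longlonglongrightarrow> 0"
    and A1b: "filterlim (\<lambda>n. s0 n * ln (real (p n))) at_top sequentially"
    and A11: "\<exists>K. \<forall>\<^sub>F n in sequentially. op_norm n (p n) (X n) \<le> K * sqrt (real n)"
    and eps_div: "filterlim (\<lambda>n. s0 n * ln (m n)) at_top sequentially"
    and prior_conc: "\<exists>C1>0. \<forall>\<^sub>F n in sequentially.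
        \<forall>A \<in> model_class (p n) (support (p n) (b0 n)) (m n).
          measure (ghs_prior sigma0 tau0 ac bc sig_eta (z n) A)
            {b \<in> space (ghs_prior sigma0 tau0 ac bc sig_eta (z n) A).
               l2norm (p n) (\<lambda>j. ext_coef A b j - b0 n j) \<le> sqrt (eps2 n)}
          \<ge> exp (- C1 * real n * eps2 n)"
  shows "\<exists>CD>0. \<forall>\<delta>>0. \<exists>\<Omega> :: nat \<Rightarrow> nat set \<Rightarrow> (nat \<Rightarrow> real) set.
           (\<forall>n A. \<Omega> n A \<in> sets (data_law n (p n) (X n) sigma0 (b0 n)))
         \<and> (\<forall>e>0. \<forall>\<^sub>F n in sequentially.
              \<forall>A \<in> model_class (p n) (support (p n) (b0 n)) (m n).
                measure (data_law n (p n) (X n) sigma0 (b0 n))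
                  (space (data_law n (p n) (X n) sigma0 (b0 n)) - \<Omega> n A) \<le> e)
         \<and> (\<forall>n. \<forall>A \<in> model_class (p n) (support (p n) (b0 n)) (m n). \<forall>y \<in> \<Omega> n A.
              Dn n (p n) (X n) sigma0 (b0 n) (ghs_prior sigma0 tau0 ac bc sig_eta (z n) A) A y
                \<ge> exp (- (CD + \<delta>) * real n * eps2 n))"
proof -
  let ?\<A> = "\<lambda>n. model_class (p n) (support (p n) (b0 n)) (m n)"
  let ?\<Pi> = "\<lambda>n. ghs_prior sigma0 tau0 ac bc sig_eta (z n)"
  let ?conc = "\<lambda>C1 n. \<forall>A \<in> ?\<A> n. measure (?\<Pi> n A)
      {b \<in> space (?\<Pi> n A). l2norm (p n) (\<lambda>j. ext_coef A b j - b0 n j) \<le> sqrt (eps2 n)}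
        \<ge> exp (- C1 * real n * eps2 n)"
  obtain C1 where C1: "C1 > 0" and conc: "\<forall>\<^sub>F n in sequentially. ?conc C1 n"
    using prior_conc by blast
  obtain K where op: "\<forall>\<^sub>F n in sequentially. op_norm n (p n) (X n) \<le> K * sqrt (real n)"
    using A11 by blast
  have "\<forall>\<^sub>F n in sequentially. s0 n * ln (m n) = real n * eps2 n"
    using eventually_gt_at_top[of 0] by eventually_elim (simp add: eps2_def)
  then have N: "filterlim (\<lambda>n. real n * eps2 n) at_top sequentially"
    by (rule iffD1[OF filterlim_cong[OF refl refl] eps_div])
  define good where "good n \<longleftrightarrow>
    ?conc C1 n \<and> op_norm n (p n) (X n) \<le> K * sqrt (real n) \<and> real n * eps2 n > 0" for n
  have good: "eventually good sequentially"
    using conc op N[unfolded filterlim_at_top_dense, rule_format, of 0]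
    unfolding good_def by eventually_elim auto
  show ?thesis
  proof (intro exI[of _ "C1 + K\<^sup>2 / (2 * sigma0\<^sup>2)"] conjI allI impI uniform_high_probability_events[OF good])
    show "C1 + K\<^sup>2 / (2 * sigma0\<^sup>2) > 0" using C1 by (simp add: add_pos_nonneg)
    fix \<delta> :: real assume \<delta>: "\<delta> > 0"
    show "(\<lambda>n. K\<^sup>2 / (\<delta>\<^sup>2 * sigma0\<^sup>2) / (real n * eps2 n)) \<longlonglongrightarrow> 0"
      using N by (intro tendsto_divide_0[OF tendsto_const] filterlim_at_top_imp_at_infinity)
    fix n A assume "good n" "A \<in> ?\<A> n"
    moreover from \<open>A \<in> ?\<A> n\<close> have "finite A"
      unfolding model_class_def by (auto intro: finite_subset)
    ultimately show "\<exists>\<omega> \<in> sets (data_law n (p n) (X n) sigma0 (b0 n)).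
        measure (data_law n (p n) (X n) sigma0 (b0 n)) (space (data_law n (p n) (X n) sigma0 (b0 n)) - \<omega>)
          \<le> K\<^sup>2 / (\<delta>\<^sup>2 * sigma0\<^sup>2) / (real n * eps2 n)
        \<and> (\<forall>y \<in> \<omega>. Dn n (p n) (X n) sigma0 (b0 n) (?\<Pi> n A) A y
              \<ge> exp (- (C1 + K\<^sup>2 / (2 * sigma0\<^sup>2) + \<delta>) * real n * eps2 n))"
      unfolding good_def using sigma0_pos hyper_pos \<delta>
      by (intro Dn_lower_bound_on_event finite_measure_ghs_prior sets_ghs_prior) auto
  qed
qed

end
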